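(* If a collection $\mathcal Q$ of probability measures on $\{0,1\}^{\mathbb N}$ is non-separable in its means, then there exists $\gamma>0$ such that $\mathrm{Mean}(\mathcal Q)$ is infinitely sequentially $\gamma$-fat-shattered.
   Context: For a probability measure $\mu$ on $\{0,1\}^{\mathbb N}$, $\mathrm{Mean}(\mu)\in[0,1]^{\mathbb N}$ is the vector whose $j$-th coordinate is $\mathbb E[X_j]$ for $X\sim\mu$; $\mathrm{Mean}(\mathcal Q)=\{\mathrm{Mean}(\mu):\mu\in\mathcal Q\}$. A countable $\varepsilon$-cover of $\mathrm{Mean}(\mathcal Q)$ is a countable set $C\subset[0,1]^{\mathbb N}$ such that every $q\in\mathrm{Mean}(\mathcal Q)$ has some $p\in C$ with $\|q-p\|_\infty<\varepsilon$; $\mathcal Q$ is non-separable in its means if for some $\varepsilon>0$ no countable $\varepsilon$-cover exists. For $M\subseteq[0,1]^{\mathbb N}$, $\gamma>0$ and $d\in\mathbb N$, a $\gamma$-shattered tree of depth $d$ for $M$ is an assignment, to each node $v$ of the complete binary tree of depth $d$ (nodes identified with binary strings of length $0,1,\dots,d-1$), of a coordinate $i_v\in\mathbb N$ and a value $r_v\in(0,1)$, such that for every binary string $(b_1,\dots,b_d)$ there exists $q\in M$ with, for each $k=1,\dots,d$ and $v=(b_1,\dots,b_{k-1})$: $q_{i_v}\le r_v-\gamma$ if $b_k=0$ and $q_{i_v}\ge r_v+\gamma$ if $b_k=1$. $M$ is infinitely sequentially $\gamma$-fat-shattered if for every $d\in\mathbb N$ there is a $\gamma$-shattered tree of depth $d$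 for $M$. *)

theory Defs
  imports "HOL-Probability.Probability"
begin

text \<open>The Cantor space {0,1}^N, with {0,1} rendered as bool (True = 1),
  equipped with the product sigma-algebra.\<close>
definition cantor_space :: "(nat \<Rightarrow> bool) measure" where
  "cantor_space = (\<Pi>\<^sub>M j\<in>(UNIV::nat set). count_space (UNIV::bool set))"

definition prob_measures_cantor :: "(nat \<Rightarrow> bool) measure set" where
  "prob_measures_cantor = {\<mu>. prob_space \<mu> \<and> sets \<mu> = sets cantor_space}"

definition Mean :: "(nat \<Rightarrow> bool) measure \<Rightarrow> (nat \<Rightarrow> real)" where
  "Mean \<mu> = (\<lambda>j. \<integral>x. (if x j then 1 else 0) \<partial>\<mu>)"

definition sup_dist :: "(nat \<Rightarrow> real) \<Rightarrow> (nat \<Rightarrow> real) \<Rightarrow> real" where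
  "sup_dist q p = (SUP j. \<bar>q j - p j\<bar>)"

definition countable_eps_cover :: "real \<Rightarrow> (nat \<Rightarrow> real) set \<Rightarrow> (nat \<Rightarrow> real) set \<Rightarrow> bool" where
  "countable_eps_cover \<epsilon> M C \<longleftrightarrow>
     countable C \<and> (\<forall>p\<in>C. \<forall>j. p j \<in> {0..1}) \<and>
     (\<forall>q\<in>M. \<exists>p\<in>C. sup_dist q p < \<epsilon>)"

definition non_separable_in_means :: "(nat \<Rightarrow> bool) measure set \<Rightarrow> bool" where
  "non_separable_in_means Q \<longleftrightarrow>
     (\<exists>\<epsilon>>0. \<not> (\<exists>C. countable_eps_cover \<epsilon> (Mean ` Q) C))"

text \<open>Nodes of the complete binary tree of depth d are bool lists of length < d.
  The node reached after the first k-1 bits of a path b is take (k-1) b.\<close>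
definition shattered_tree ::
  "(nat \<Rightarrow> real) set \<Rightarrow> real \<Rightarrow> nat \<Rightarrow> (bool list \<Rightarrow> nat) \<Rightarrow> (bool list \<Rightarrow> real) \<Rightarrow> bool" where
  "shattered_tree M \<gamma> d i r \<longleftrightarrow>
     (\<forall>v. length v < d \<longrightarrow> r v \<in> {0<..<1}) \<and>
     (\<forall>b. length b = d \<longrightarrow>
        (\<exists>q\<in>M. \<forall>k<d.
            (\<not> b ! k \<longrightarrow> q (i (take k b)) \<le> r (take k b) - \<gamma>) \<and>
            (b ! k \<longrightarrow> q (i (take k b)) \<ge> r (take k b) + \<gamma>)))"

definition inf_seq_fat_shattered :: "real \<Rightarrow> (nat \<Rightarrow> real) set \<Rightarrow> bool" where
  "inf_seq_fat_shattered \<gamma> M \<longleftrightarrow> (\<forall>d::nat. \<exists>i r. shattered_tree M \<gamma> d i r)"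

end

theory Submission
  imports Defs
begin

text \<open>If \<open>S \<subseteq> [0,1]\<^sup>\<nat>\<close> is not coverable, then some
  coordinate \<open>i\<close> and threshold \<open>r\<close> split \<open>S\<close> into two non-coverable parts
  \<open>{q i \<le> r - \<gamma>}\<close> and \<open>{q i \<ge> r + \<gamma>}\<close>: otherwise, for every \<open>i\<close> pick the least
  grid point \<open>a\<^sub>i \<in> \<gamma>\<nat>\<close> below which \<open>S\<close> is not coverable; then \<open>{q i \<le> a\<^sub>i - \<gamma>}\<close> and
  (as \<open>r = a\<^sub>i + \<gamma>\<close> does not split) \<open>{q i \<ge> a\<^sub>i + 2\<gamma>}\<close> are coverable, and what remains
  lies within \<open>3\<gamma>/2\<close> of the point \<open>(a\<^sub>i + \<gamma>/2)\<^sub>i\<close>, so \<open>S\<close> would be a countable union of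
  coverable sets. Splitting recursively grows shattered trees of every depth.\<close>

definition eps_coverable :: "real \<Rightarrow> (nat \<Rightarrow> real) set \<Rightarrow> bool" where
  "eps_coverable \<epsilon> S \<longleftrightarrow> (\<exists>C. countable_eps_cover \<epsilon> S C)"

lemma eps_coverable_empty: "eps_coverable \<epsilon> {}"
  unfolding eps_coverable_def countable_eps_cover_def by (rule exI[of _ "{}"]) simp

lemma eps_coverable_subset: "eps_coverable \<epsilon> T \<Longrightarrow> S \<subseteq> T \<Longrightarrow> eps_coverable \<epsilon> S"
  unfolding eps_coverable_def countable_eps_cover_def by (meson subsetD)

lemma eps_coverable_Un:
  assumes "eps_coverable \<epsilon> S" "eps_coverable \<epsilon> T"
  shows "eps_coverable \<epsilon> (S \<union> T)"
proof -
  from assms obtain C D where "countable_eps_cover \<epsilon> S C" "countable_eps_cover \<epsilon> T D"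
    unfolding eps_coverable_def by blast
  then have "countable_eps_cover \<epsilon> (S \<union> T) (C \<union> D)"
    unfolding countable_eps_cover_def by auto
  then show ?thesis unfolding eps_coverable_def by blast
qed

lemma eps_coverable_UN:
  assumes "\<And>n::nat. eps_coverable \<epsilon> (S n)"
  shows "eps_coverable \<epsilon> (\<Union>n. S n)"
proof -
  from assms obtain C where "\<And>n. countable_eps_cover \<epsilon> (S n) (C n)"
    unfolding eps_coverable_def by metis
  then have "countable_eps_cover \<epsilon> (\<Union>n. S n) (\<Union>n. C n)"
    unfolding countable_eps_cover_def by fastforce
  then show ?thesis unfolding eps_coverable_def by blast
qed

lemma unit_cubeD: "S \<subseteq> UNIV \<rightarrow> {0..1} \<Longrightarrow> q \<in> S \<Longrightarrow> 0 \<le> q j \<and> q j \<le> 1"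
  by (auto simp: Pi_iff)

text \<open>The centre \<open>m\<close> need not lie in \<open>[0,1]\<^sup>\<nat>\<close>: clipping it there moves it no further from \<open>S\<close>.\<close>

lemma eps_coverable_near_point:
  assumes S: "S \<subseteq> UNIV \<rightarrow> {0..1}" and near: "\<And>q j. q \<in> S \<Longrightarrow> \<bar>q j - m j\<bar> \<le> t"
    and "t < \<epsilon>"
  shows "eps_coverable \<epsilon> S"
proof -
  define c where "c j = max 0 (min 1 (m j))" for j
  have "sup_dist q c < \<epsilon>" if "q \<in> S" for q
  proof -
    have "\<bar>q j - c j\<bar> \<le> t" for j
    proof -
      have "\<bar>q j - c j\<bar> \<le> \<bar>q j - m j\<bar>"
        using unit_cubeD[OF S that, of j] unfolding c_def by (auto simp: max_def min_def abs_if)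
      then show ?thesis using near[OF that, of j] by linarith
    qed
    then have "sup_dist q c \<le> t" unfolding sup_dist_def by (rule cSUP_least[OF UNIV_not_empty])
    then show ?thesis using \<open>t < \<epsilon>\<close> by linarith
  qed
  then have "countable_eps_cover \<epsilon> S {c}"
    unfolding countable_eps_cover_def c_def by auto
  then show ?thesis unfolding eps_coverable_def by blast
qed

lemma uncoverable_threshold:
  assumes "\<gamma> > 0" and S: "S \<subseteq> UNIV \<rightarrow> {0..1}" and "\<not> eps_coverable \<epsilon> S"
  shows "\<exists>a\<ge>0. \<not> eps_coverable \<epsilon> {q\<in>S. q i \<le> a} \<and> eps_coverable \<epsilon> {q\<in>S. q i \<le> a - \<gamma>}"
proof -
  define P where "P k \<longleftrightarrow> \<not> eps_coverable \<epsilon> {q\<in>S. q i \<le> real k * \<gamma>}" for k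
  define K where "K = (LEAST k. P k)"
  have "1 / \<gamma> \<le> real (nat \<lceil>1/\<gamma>\<rceil>)" by linarith
  then have "1 / \<gamma> * \<gamma> \<le> real (nat \<lceil>1/\<gamma>\<rceil>) * \<gamma>"
    using \<open>\<gamma> > 0\<close> by (intro mult_right_mono) auto
  then have "1 \<le> real (nat \<lceil>1/\<gamma>\<rceil>) * \<gamma>" using \<open>\<gamma> > 0\<close> by simp
  then have "{q\<in>S. q i \<le> real (nat \<lceil>1/\<gamma>\<rceil>) * \<gamma>} = S"
    using unit_cubeD[OF S, of _ i] by fastforce
  then have "P (nat \<lceil>1/\<gamma>\<rceil>)" unfolding P_def using assms(3) by simp
  then have "P K" unfolding K_def by (rule LeastI)
  moreover have "eps_coverable \<epsilon> {q\<in>S. q i \<le> real K * \<gamma> - \<gamma>}"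
  proof (cases K)
    case 0
    then have "real K * \<gamma> - \<gamma> < 0" using \<open>\<gamma> > 0\<close> by simp
    then have "{q\<in>S. q i \<le> real K * \<gamma> - \<gamma>} = {}"
      using unit_cubeD[OF S, of _ i] by fastforce
    then show ?thesis by (metis eps_coverable_empty)
  next
    case (Suc k)
    then have "\<not> P k" unfolding K_def by (metis lessI not_less_Least)
    then show ?thesis using Suc unfolding P_def by (simp add: algebra_simps)
  qed
  ultimately show ?thesis unfolding P_def using \<open>\<gamma> > 0\<close> by (intro exI[of _ "real K * \<gamma>"]) simp
qed

lemma uncoverable_split:
  assumes "\<gamma> > 0" "3 * \<gamma> < 2 * \<epsilon>" and S: "S \<subseteq> UNIV \<rightarrow> {0..1}" and "\<not> eps_coverable \<epsilon> S"
  shows "\<exists>i r. r \<in> {0<..<1} \<and> \<not> eps_coverable \<epsilon> {q\<in>S. q i \<le> r - \<gamma>}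
    \<and> \<not> eps_coverable \<epsilon> {q\<in>S. q i \<ge> r + \<gamma>}"
proof (rule ccontr)
  assume no_split: "\<not> ?thesis"
  have "\<forall>i. \<exists>a\<ge>0. \<not> eps_coverable \<epsilon> {q\<in>S. q i \<le> a} \<and> eps_coverable \<epsilon> {q\<in>S. q i \<le> a - \<gamma>}"
    using uncoverable_threshold[OF \<open>\<gamma> > 0\<close> S \<open>\<not> eps_coverable \<epsilon> S\<close>] by blast
  then obtain a where a: "\<And>i. a i \<ge> 0" "\<And>i. \<not> eps_coverable \<epsilon> {q\<in>S. q i \<le> a i}"
    and below: "\<And>i. eps_coverable \<epsilon> {q\<in>S. q i \<le> a i - \<gamma>}"
    using choice[of "\<lambda>i a. a \<ge> 0 \<and> \<not> eps_coverable \<epsilon> {q\<in>S. q i \<le> a}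
      \<and> eps_coverable \<epsilon> {q\<in>S. q i \<le> a - \<gamma>}"] by blast
  have above: "eps_coverable \<epsilon> {q\<in>S. q i \<ge> a i + 2 * \<gamma>}" for i
  proof (cases "a i + \<gamma> < 1")
    case True
    then have "a i + \<gamma> \<in> {0<..<1}" using a(1)[of i] \<open>\<gamma> > 0\<close> by simp
    then have "eps_coverable \<epsilon> {q\<in>S. q i \<le> (a i + \<gamma>) - \<gamma>} \<or>
        eps_coverable \<epsilon> {q\<in>S. q i \<ge> (a i + \<gamma>) + \<gamma>}"
      using no_split by blast
    then show ?thesis using a(2)[of i] by (simp add: algebra_simps)
  next
    case False
    then have "1 < a i + 2 * \<gamma>" using \<open>\<gamma> > 0\<close> by simp
    then have "{q\<in>S. q i \<ge> a i + 2 * \<gamma>} = {}"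
      using unit_cubeD[OF S, of _ i] by fastforce
    then show ?thesis by (metis eps_coverable_empty)
  qed
  define R where "R = {q\<in>S. \<forall>i. a i - \<gamma> < q i \<and> q i < a i + 2 * \<gamma>}"
  have "eps_coverable \<epsilon> R"
  proof (rule eps_coverable_near_point)
    show "R \<subseteq> UNIV \<rightarrow> {0..1}" using S unfolding R_def by blast
    show "\<bar>q i - (a i + \<gamma> / 2)\<bar> \<le> 3 * \<gamma> / 2" if "q \<in> R" for q i
    proof -
      from that have "a i - \<gamma> < q i" "q i < a i + 2 * \<gamma>" unfolding R_def by auto
      then show ?thesis by linarith
    qed
  qed (use assms(2) in simp)
  then have "eps_coverable \<epsilon> ((\<Union>i. {q\<in>S. q i \<le> a i - \<gamma>}) \<union> (\<Union>i. {q\<in>S. q i \<ge> a i + 2 * \<gamma>}) \<union> R)"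
    by (intro eps_coverable_Un eps_coverable_UN below above)
  moreover have "S \<subseteq> (\<Union>i. {q\<in>S. q i \<le> a i - \<gamma>}) \<union> (\<Union>i. {q\<in>S. q i \<ge> a i + 2 * \<gamma>}) \<union> R"
    unfolding R_def by (auto simp: not_less)
  ultimately have "eps_coverable \<epsilon> S" by (rule eps_coverable_subset)
  then show False using \<open>\<not> eps_coverable \<epsilon> S\<close> by contradiction
qed

fun tree_node :: "'a \<Rightarrow> (bool list \<Rightarrow> 'a) \<Rightarrow> (bool list \<Rightarrow> 'a) \<Rightarrow> bool list \<Rightarrow> 'a" where
  "tree_node x f g [] = x"
| "tree_node x f g (b # v) = (if b then g v else f v)"

lemma shattered_tree_node:
  assumes r: "r \<in> {0<..<1}"
    and t0: "shattered_tree {q\<in>M. q j \<le> r - \<gamma>} \<gamma> d i0 r0"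
    and t1: "shattered_tree {q\<in>M. q j \<ge> r + \<gamma>} \<gamma> d i1 r1"
  shows "shattered_tree M \<gamma> (Suc d) (tree_node j i0 i1) (tree_node r r0 r1)"
  unfolding shattered_tree_def
proof (intro conjI allI impI)
  fix v :: "bool list" assume "length v < Suc d"
  then show "tree_node r r0 r1 v \<in> {0<..<1}"
    using r t0 t1 unfolding shattered_tree_def by (cases v) auto
next
  fix b :: "bool list" assume "length b = Suc d"
  then obtain x w where b: "b = x # w" "length w = d" by (cases b) auto
  define i' r' where "i' = (if x then i1 else i0)" and "r' = (if x then r1 else r0)"
  have "shattered_tree {q\<in>M. if x then q j \<ge> r + \<gamma> else q j \<le> r - \<gamma>} \<gamma> d i' r'"
    using t0 t1 unfolding i'_def r'_def by (cases x) simp_all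
  then obtain q where q: "q \<in> M" "if x then q j \<ge> r + \<gamma> else q j \<le> r - \<gamma>"
    and path: "\<forall>k<d. (\<not> w ! k \<longrightarrow> q (i' (take k w)) \<le> r' (take k w) - \<gamma>) \<and>
      (w ! k \<longrightarrow> q (i' (take k w)) \<ge> r' (take k w) + \<gamma>)"
    using b(2) unfolding shattered_tree_def by blast
  show "\<exists>q\<in>M. \<forall>k<Suc d.
      (\<not> b ! k \<longrightarrow> q (tree_node j i0 i1 (take k b)) \<le> tree_node r r0 r1 (take k b) - \<gamma>) \<and>
      (b ! k \<longrightarrow> q (tree_node j i0 i1 (take k b)) \<ge> tree_node r r0 r1 (take k b) + \<gamma>)"
  proof (intro bexI[OF _ q(1)] allI impI)
    fix k assume "k < Suc d"
    then show "(\<not> b ! k \<longrightarrow> q (tree_node j i0 i1 (take k b)) \<le> tree_node r r0 r1 (take k b) - \<gamma>) \<and>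
      (b ! k \<longrightarrow> q (tree_node j i0 i1 (take k b)) \<ge> tree_node r r0 r1 (take k b) + \<gamma>)"
      using q(2) path unfolding b(1) i'_def r'_def by (cases k) (auto split: if_splits)
  qed
qed

lemma uncoverable_imp_shattered_tree:
  assumes "\<gamma> > 0" "3 * \<gamma> < 2 * \<epsilon>" and "S \<subseteq> UNIV \<rightarrow> {0..1}" "\<not> eps_coverable \<epsilon> S"
  shows "\<exists>i r. shattered_tree S \<gamma> d i r"
  using assms(3,4)
proof (induction d arbitrary: S)
  case 0
  then have "S \<noteq> {}" using eps_coverable_empty by auto
  then show ?case unfolding shattered_tree_def by auto
next
  case (Suc d)
  obtain j r where r: "r \<in> {0<..<1}"
    and "\<not> eps_coverable \<epsilon> {q\<in>S. q j \<le> r - \<gamma>}" "\<not> eps_coverable \<epsilon> {q\<in>S. q j \<ge> r + \<gamma>}"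
    using uncoverable_split[OF assms(1,2) Suc.prems] by blast
  moreover have "{q\<in>S. q j \<le> r - \<gamma>} \<subseteq> UNIV \<rightarrow> {0..1}" "{q\<in>S. q j \<ge> r + \<gamma>} \<subseteq> UNIV \<rightarrow> {0..1}"
    using Suc.prems(1) by auto
  ultimately obtain i0 r0 i1 r1 where
      "shattered_tree {q\<in>S. q j \<le> r - \<gamma>} \<gamma> d i0 r0" "shattered_tree {q\<in>S. q j \<ge> r + \<gamma>} \<gamma> d i1 r1"
    using Suc.IH by meson
  then show ?case using shattered_tree_node[OF r] by blast
qed

lemma Mean_in_unit_cube:
  assumes "\<mu> \<in> prob_measures_cantor"
  shows "Mean \<mu> \<in> UNIV \<rightarrow> {0..1}"
proof
  fix j :: nat
  interpret prob_space \<mu> using assms unfolding prob_measures_cantor_def by auto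
  let ?f = "\<lambda>x. if x j then 1 else 0 :: real"
  have "0 \<le> integral\<^sup>L \<mu> ?f" by (rule integral_nonneg_AE) auto
  moreover have "integral\<^sup>L \<mu> ?f \<le> 1"
  proof (cases "integrable \<mu> ?f")
    case True
    then have "integral\<^sup>L \<mu> ?f \<le> integral\<^sup>L \<mu> (\<lambda>_. 1::real)"
      by (intro integral_mono) auto
    then show ?thesis by (simp add: prob_space)
  next
    case False
    then show ?thesis by (simp add: not_integrable_integral_eq)
  qed
  ultimately show "Mean \<mu> j \<in> {0..1}" unfolding Mean_def by simp
qed

theorem mainTheorem12:
  fixes Q :: "(nat \<Rightarrow> bool) measure set"
  assumes "Q \<subseteq> prob_measures_cantor"
    and "non_separable_in_means Q"
  shows "\<exists>\<gamma>>0. inf_seq_fat_shattered \<gamma> (Mean ` Q)"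
proof -
  obtain \<epsilon> where "\<epsilon> > 0" and uncoverable: "\<not> eps_coverable \<epsilon> (Mean ` Q)"
    using assms(2) unfolding non_separable_in_means_def eps_coverable_def by blast
  have "Mean ` Q \<subseteq> UNIV \<rightarrow> {0..1}"
    using assms(1) Mean_in_unit_cube by blast
  then have "inf_seq_fat_shattered (\<epsilon> / 2) (Mean ` Q)"
    unfolding inf_seq_fat_shattered_def
    using uncoverable_imp_shattered_tree[of "\<epsilon> / 2" \<epsilon>] \<open>\<epsilon> > 0\<close> uncoverable by simp
  then show ?thesis using \<open>\<epsilon> > 0\<close> by (intro exI[of _ "\<epsilon> / 2"]) simp
qed

end
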